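(* Let $p$ be a prime. There is exactly one numerical semigroup $S$ of genus $p+1$ that is both reflective and symmetric, namely $S=\langle 2,7\rangle$ if $p=2$, and $S=\langle \{p\}\cup\{p+2,p+3,\dots,2p-1\}\rangle$ if $p$ is odd.
   Context: A numerical semigroup is a submonoid $S$ of $(\mathbb{N}_0,+)$ with finite complement; its genus is the number of elements of $\mathbb{N}_0\setminus S$ and $\mathrm{F}(S)$ is its largest gap. $\langle A\rangle$ denotes the set of finite $\mathbb{N}_0$-linear combinations of elements of $A$. $S$ is symmetric if for every $z\in\mathbb{Z}$ exactly one of $z$ and $\mathrm{F}(S)-z$ lies in $S$. A numerical semigroup $S$ of genus $g\ge1$ is called reflective if for every $z\in\{0,1,\dots,g-1\}$ exactly one of $z$ and $z+g$ belongs to $S$. *)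

theory Defs
  imports "HOL-Computational_Algebra.Primes"
begin

inductive_set generated :: "nat set \<Rightarrow> nat set" for A :: "nat set" where
  gen_zero: "0 \<in> generated A"
| gen_add: "a \<in> A \<Longrightarrow> s \<in> generated A \<Longrightarrow> a + s \<in> generated A"

definition numerical_semigroup :: "nat set \<Rightarrow> bool" where
  "numerical_semigroup S \<longleftrightarrow> 0 \<in> S \<and> (\<forall>x\<in>S. \<forall>y\<in>S. x + y \<in> S) \<and> finite (UNIV - S)"

definition genus :: "nat set \<Rightarrow> nat" where
  "genus S = card (UNIV - S)"

text \<open>Largest gap; by the usual convention F(N_0) = -1.\<close>
definition frobenius :: "nat set \<Rightarrow> int" where
  "frobenius S = (if UNIV - S = {} then -1 else int (Max (UNIV - S)))"

text \<open>z ranges over the integers; negative integers are never in S.\<close>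
definition symmetric_ns :: "nat set \<Rightarrow> bool" where
  "symmetric_ns S \<longleftrightarrow>
     (\<forall>z::int. (z \<ge> 0 \<and> nat z \<in> S) \<noteq> (frobenius S - z \<ge> 0 \<and> nat (frobenius S - z) \<in> S))"

definition reflective :: "nat set \<Rightarrow> bool" where
  "reflective S \<longleftrightarrow> genus S \<ge> 1 \<and>
     (\<forall>z < genus S. (z \<in> S) \<noteq> (z + genus S \<in> S))"

end

theory Submission
  imports Defs
begin

text \<open>
  For a symmetric semigroup of genus g the Frobenius number is 2g - 1, and reflectivity then turns
  the symmetry z \<leftrightarrow> 2g - 1 - z into a symmetry z \<leftrightarrow> g - 1 - z of S on [0, g - 1].
  Hence S \<inter> [0, g - 1] is closed under differences, so with g - 1 = p it is closed under
  p mod a, and the least positive element below p would divide p; since 1 \<notin> S, nothing in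
  (0, p) lies in S. Reflectivity and symmetry then determine S completely:
  S = {0, p} \<union> [p + 2, 2p] \<union> [2p + 2, \<infinity>).
\<close>

lemma generated_base: "a \<in> A \<Longrightarrow> a \<in> generated A"
  using gen_add[of a A 0] gen_zero by simp

lemma generated_add: "s \<in> generated A \<Longrightarrow> t \<in> generated A \<Longrightarrow> s + t \<in> generated A"
  by (induction s rule: generated.induct) (auto simp: add.assoc intro: gen_add)

lemma generated_least:
  assumes "A \<subseteq> B" "0 \<in> B" "\<And>x y. x \<in> B \<Longrightarrow> y \<in> B \<Longrightarrow> x + y \<in> B"
  shows "generated A \<subseteq> B"
proof
  fix x assume "x \<in> generated A"
  then show "x \<in> B" by (induction x rule: generated.induct) (use assms in auto)
qed

lemma numerical_semigroup_one_mem_eq_UNIV: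
  assumes "numerical_semigroup S" "1 \<in> S"
  shows "S = UNIV"
proof -
  have "n \<in> S" for n
  proof (induction n)
    case 0 show ?case using assms(1) by (simp add: numerical_semigroup_def)
  next
    case (Suc n)
    then have "1 + n \<in> S" using assms unfolding numerical_semigroup_def by blast
    then show ?case by simp
  qed
  then show ?thesis by blast
qed

lemma genus_pos_gaps_nonempty: "genus S \<ge> 1 \<Longrightarrow> UNIV - S \<noteq> {}"
  by (metis card.empty genus_def not_one_le_zero)

lemma gap_le_Max:
  assumes "numerical_semigroup S" "x \<notin> S"
  shows "x \<le> Max (UNIV - S)"
  using assms by (intro Max_ge) (auto simp: numerical_semigroup_def)

lemma symmetric_ns_mem_iff:
  assumes "symmetric_ns S" "genus S \<ge> 1" "z \<le> Max (UNIV - S)"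
  shows "z \<in> S \<longleftrightarrow> Max (UNIV - S) - z \<notin> S"
proof -
  let ?N = "Max (UNIV - S)"
  have "frobenius S = int ?N"
    using genus_pos_gaps_nonempty[OF assms(2)] by (simp add: frobenius_def)
  moreover have "int ?N - int z = int (?N - z)" using assms(3) by simp
  ultimately have "(nat (int z) \<in> S) \<noteq> (nat (int (?N - z)) \<in> S)"
    using assms(1) unfolding symmetric_ns_def by (metis of_nat_0_le_iff)
  then show ?thesis by auto
qed

text \<open>z \<mapsto> F(S) - z maps the gaps bijectively onto the elements of S below F(S).\<close>
lemma symmetric_ns_Max_gaps:
  assumes "numerical_semigroup S" "symmetric_ns S" "genus S \<ge> 1"
  shows "Max (UNIV - S) + 1 = 2 * genus S"
proof -
  let ?N = "Max (UNIV - S)"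
  have fin: "finite (UNIV - S)" using assms(1) by (simp add: numerical_semigroup_def)
  have gap_le: "x \<le> ?N" if "x \<notin> S" for x using gap_le_Max[OF assms(1) that] .
  have mirror: "z \<in> S \<longleftrightarrow> ?N - z \<notin> S" if "z \<le> ?N" for z
    using symmetric_ns_mem_iff[OF assms(2,3) that] .
  have split: "{0..?N} = (UNIV - S) \<union> (S \<inter> {0..?N})" using gap_le by auto
  have "S \<inter> {0..?N} = (\<lambda>z. ?N - z) ` (UNIV - S)"
  proof (intro set_eqI iffI)
    fix x assume x: "x \<in> S \<inter> {0..?N}"
    then have "?N - x \<in> UNIV - S" "x = ?N - (?N - x)" using mirror[of x] by auto
    then show "x \<in> (\<lambda>z. ?N - z) ` (UNIV - S)" by blast
  next
    fix x assume "x \<in> (\<lambda>z. ?N - z) ` (UNIV - S)"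
    then obtain y where "y \<notin> S" "x = ?N - y" by auto
    then show "x \<in> S \<inter> {0..?N}" using mirror[of y] gap_le[of y] by auto
  qed
  moreover have "inj_on (\<lambda>z. ?N - z) (UNIV - S)"
  proof (rule inj_onI)
    fix x y assume "x \<in> UNIV - S" "y \<in> UNIV - S" "?N - x = ?N - y"
    moreover have "x \<le> ?N" "y \<le> ?N" using gap_le calculation by auto
    ultimately show "x = y" by linarith
  qed
  ultimately have card_elems: "card (S \<inter> {0..?N}) = genus S"
    by (simp add: card_image genus_def)
  have "?N + 1 = card {0..?N}" by simp
  also have "\<dots> = card (UNIV - S) + card (S \<inter> {0..?N})"
    by (subst split, rule card_Un_disjoint) (use fin in auto)
  finally show ?thesis using card_elems by (simp add: genus_def)
qed

lemma reflective_symmetric_mirror: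
  assumes "numerical_semigroup S" "reflective S" "symmetric_ns S" "z < genus S"
  shows "z \<in> S \<longleftrightarrow> genus S - 1 - z \<in> S"
proof -
  let ?g = "genus S"
  have g: "?g \<ge> 1" using assms(2) by (simp add: reflective_def)
  have N: "Max (UNIV - S) = 2 * ?g - 1" using symmetric_ns_Max_gaps[OF assms(1,3) g] by simp
  have "z \<in> S \<longleftrightarrow> z + ?g \<notin> S" using assms(2,4) by (auto simp: reflective_def)
  also have "\<dots> \<longleftrightarrow> Max (UNIV - S) - (z + ?g) \<in> S"
    using symmetric_ns_mem_iff[OF assms(3) g, of "z + ?g"] assms(4) N by auto
  also have "Max (UNIV - S) - (z + ?g) = ?g - 1 - z" using N by simp
  finally show ?thesis .
qed

locale mirror_closed =
  fixes S :: "nat set" and m :: nat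
  assumes zero_mem: "0 \<in> S"
    and add_mem: "x \<in> S \<Longrightarrow> y \<in> S \<Longrightarrow> x + y \<in> S"
    and mirror: "z \<le> m \<Longrightarrow> z \<in> S \<longleftrightarrow> m - z \<in> S"
begin

lemma top_mem: "m \<in> S"
  using mirror[of 0] zero_mem by simp

lemma diff_mem:
  assumes "a \<in> S" "b \<in> S" "b \<le> a" "a \<le> m"
  shows "a - b \<in> S"
proof -
  have "(m - a) + b \<in> S" using assms mirror[of a] add_mem by blast
  moreover have "m - ((m - a) + b) = a - b" using assms by simp
  ultimately show ?thesis using mirror[of "(m - a) + b"] assms by auto
qed

lemma mod_mem:
  assumes "a \<in> S" "a > 0"
  shows "m mod a \<in> S"
proof -
  have "m - k * a \<in> S" if "k * a \<le> m" for k
    using that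
  proof (induction k)
    case 0 show ?case using top_mem by simp
  next
    case (Suc k)
    then have "(m - k * a) - a \<in> S" using assms diff_mem[of "m - k * a" a] by auto
    then show ?case by (simp add: diff_diff_add add.commute)
  qed
  then show ?thesis by (simp add: minus_div_mult_eq_mod [symmetric])
qed

lemma prime_no_small_mem:
  assumes "prime m" "1 \<notin> S"
  shows "a \<in> S \<Longrightarrow> 0 < a \<Longrightarrow> a < m \<Longrightarrow> False"
proof (induction a rule: less_induct)
  case (less a)
  have "m mod a \<in> S" "m mod a < a" using mod_mem less.prems by auto
  then have "m mod a = 0" using less.IH less.prems by (meson order.strict_trans neq0_conv)
  then have "a = 1 \<or> a = m" using assms(1) by (auto simp: prime_nat_iff)
  then show False using less.prems assms(2) by auto
qed

end

definition reflective_symmetric_sg :: "nat \<Rightarrow> nat set" where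
  "reflective_symmetric_sg p = {x. x = 0 \<or> x = p \<or> (p + 2 \<le> x \<and> x \<le> 2 * p) \<or> 2 * p + 2 \<le> x}"

lemma reflective_symmetric_sg_add:
  "p \<ge> 2 \<Longrightarrow> x \<in> reflective_symmetric_sg p \<Longrightarrow> y \<in> reflective_symmetric_sg p
   \<Longrightarrow> x + y \<in> reflective_symmetric_sg p"
  unfolding reflective_symmetric_sg_def by auto

lemma reflective_symmetric_sg_gaps:
  "p \<ge> 2 \<Longrightarrow> UNIV - reflective_symmetric_sg p = {1..<p} \<union> {p + 1, 2 * p + 1}"
  by (auto simp: reflective_symmetric_sg_def)

lemma reflective_symmetric_sg_properties:
  assumes "p \<ge> 2"
  defines "T \<equiv> reflective_symmetric_sg p"
  shows "numerical_semigroup T" "genus T = p + 1" "reflective T" "symmetric_ns T"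
proof -
  have gaps: "UNIV - T = {1..<p} \<union> {p + 1, 2 * p + 1}"
    using reflective_symmetric_sg_gaps[OF assms(1)] by (simp add: T_def)
  show "numerical_semigroup T"
    unfolding numerical_semigroup_def gaps
    using reflective_symmetric_sg_add[OF assms(1)] by (auto simp: T_def reflective_symmetric_sg_def)
  have "card ({1..<p} \<union> {p + 1, 2 * p + 1}) = card {1..<p} + card {p + 1, 2 * p + 1}"
    by (rule card_Un_disjoint) auto
  then show genus: "genus T = p + 1" using assms(1) by (simp add: genus_def gaps)
  show "reflective T"
    unfolding reflective_def genus by (auto simp: T_def reflective_symmetric_sg_def)
  have "Max (UNIV - T) = 2 * p + 1" unfolding gaps by (rule Max_eqI) auto
  then have F: "frobenius T = 2 * int p + 1" using gaps by (simp add: frobenius_def)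
  have mirror: "n \<in> T \<longleftrightarrow> 2 * p + 1 - n \<notin> T" if "n \<le> 2 * p + 1" for n
    using that assms(1) unfolding T_def reflective_symmetric_sg_def mem_Collect_eq by arith
  have large: "n \<in> T" if "n > 2 * p + 1" for n
    using that by (simp add: T_def reflective_symmetric_sg_def)
  show "symmetric_ns T"
    unfolding symmetric_ns_def F
  proof
    fix z :: int
    consider "z < 0" | "z > 2 * int p + 1" | n where "z = int n" "n \<le> 2 * p + 1"
    proof (cases "z < 0 \<or> z > 2 * int p + 1")
      case False
      then obtain n where "z = int n" by (metis nonneg_int_cases not_less)
      with False that(3) show ?thesis by simp
    qed blast+
    then show "(0 \<le> z \<and> nat z \<in> T) \<noteq> (0 \<le> 2 * int p + 1 - z \<and> nat (2 * int p + 1 - z) \<in> T)"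
    proof cases
      case 1 then show ?thesis using large[of "nat (2 * int p + 1 - z)"] by auto
    next
      case 2 then show ?thesis using large[of "nat z"] by auto
    next
      case 3
      then have "nat (2 * int p + 1 - z) = 2 * p + 1 - n" by auto
      then show ?thesis using 3 mirror[OF 3(2)] by simp
    qed
  qed
qed

lemma generated_2_7: "generated {2, 7} = reflective_symmetric_sg 2"
proof
  show "generated {2, 7} \<subseteq> reflective_symmetric_sg 2"
    by (rule generated_least) (auto simp: reflective_symmetric_sg_def)
  show "reflective_symmetric_sg 2 \<subseteq> generated {2, 7}"
  proof
    fix x assume "x \<in> reflective_symmetric_sg 2"
    then show "x \<in> generated {2, 7}"
    proof (induction x rule: less_induct)
      case (less x)
      show ?case
      proof (cases "x \<in> {0, 2, 7}")
        case True then show ?thesis using gen_zero generated_base by auto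
      next
        case False
        then have "x - 2 \<in> reflective_symmetric_sg 2"
          using less.prems by (auto simp: reflective_symmetric_sg_def)
        then have "x - 2 \<in> generated {2, 7}" using less.IH False by force
        then have "2 + (x - 2) \<in> generated {2, 7}" using generated_add generated_base by blast
        moreover have "x \<ge> 2" using False less.prems by (auto simp: reflective_symmetric_sg_def)
        ultimately show ?thesis by (metis le_add_diff_inverse)
      qed
    qed
  qed
qed

lemma generated_odd:
  assumes "p \<ge> 3"
  shows "generated ({p} \<union> {p + 2 .. 2 * p - 1}) = reflective_symmetric_sg p"
proof
  let ?G = "{p} \<union> {p + 2 .. 2 * p - 1}"
  show "generated ?G \<subseteq> reflective_symmetric_sg p"
    by (rule generated_least) (use assms reflective_symmetric_sg_add in \<open>auto simp: reflective_symmetric_sg_def\<close>)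
  have gens: "a \<in> generated ?G" if "a \<in> ?G" for a using that generated_base by blast
  show "reflective_symmetric_sg p \<subseteq> generated ?G"
  proof
    fix x assume "x \<in> reflective_symmetric_sg p"
    then show "x \<in> generated ?G"
    proof (induction x rule: less_induct)
      case (less x)
      consider "x = 0" | "x \<in> ?G" | "x = 3 * p + 1" | "x \<noteq> 3 * p + 1" "x \<ge> 2 * p"
        using less.prems assms by (force simp: reflective_symmetric_sg_def)
      then show ?case
      proof cases
        case 1 then show ?thesis using gen_zero by simp
      next
        case 2 then show ?thesis by (rule gens)
      next
        case 3
        \<comment> \<open>the only element above 2p not reachable by adding p to a smaller element\<close>
        have "(p + 2) + (2 * p - 1) \<in> generated ?G" using assms by (intro generated_add gens) auto
        then show ?thesis using 3 assms by simp
      next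
        case 4
        then have "x - p \<in> reflective_symmetric_sg p"
          using less.prems assms by (auto simp: reflective_symmetric_sg_def)
        then have "x - p \<in> generated ?G" using less.IH 4 assms by simp
        then have "p + (x - p) \<in> generated ?G" using generated_add gens by blast
        then show ?thesis using 4 by simp
      qed
    qed
  qed
qed

lemma reflective_symmetric_prime_genus:
  assumes "prime p" "numerical_semigroup S" "genus S = p + 1" "reflective S" "symmetric_ns S"
  shows "S = reflective_symmetric_sg p"
proof -
  have p2: "p \<ge> 2" using assms(1) prime_ge_2_nat by blast
  have zero: "0 \<in> S" and add: "\<And>x y. x \<in> S \<Longrightarrow> y \<in> S \<Longrightarrow> x + y \<in> S"
    using assms(2) by (auto simp: numerical_semigroup_def)
  have refl: "z \<in> S \<longleftrightarrow> z + (p + 1) \<notin> S" if "z \<le> p" for z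
    using assms(3,4) that by (auto simp: reflective_def)
  interpret mirror_closed S p
  proof
    show "z \<in> S \<longleftrightarrow> p - z \<in> S" if "z \<le> p" for z
      using reflective_symmetric_mirror[OF assms(2,4,5), of z] assms(3) that by simp
  qed (use zero add in auto)
  have "1 \<notin> S"
    using numerical_semigroup_one_mem_eq_UNIV[OF assms(2)] assms(3) by (auto simp: genus_def)
  then have small: "a \<notin> S" if "0 < a" "a < p" for a
    using prime_no_small_mem[OF assms(1)] that by blast
  have N: "Max (UNIV - S) = 2 * p + 1"
    using symmetric_ns_Max_gaps[OF assms(2,5)] assms(3) by simp
  have large: "x \<in> S" if "x > 2 * p + 1" for x
    using gap_le_Max[OF assms(2), of x] that N by fastforce
  show ?thesis
  proof (rule set_eqI)
    fix x
    consider "x = 0" | "0 < x" "x < p" | "x = p" | "x = p + 1" | "p + 2 \<le> x" "x \<le> 2 * p"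
      | "x = 2 * p + 1" | "x \<ge> 2 * p + 2" by linarith
    then show "x \<in> S \<longleftrightarrow> x \<in> reflective_symmetric_sg p"
    proof cases
      case 5
      then have "x - (p + 1) + (p + 1) \<in> S" using small[of "x - (p + 1)"] refl[of "x - (p + 1)"] by auto
      then show ?thesis using 5 by (auto simp: reflective_symmetric_sg_def)
    next
      case 6
      then have "x \<notin> S" using refl[of p] top_mem by (simp add: mult_2)
      then show ?thesis using 6 p2 by (simp add: reflective_symmetric_sg_def)
    qed (use zero small top_mem refl[of 0] large p2 in \<open>auto simp: reflective_symmetric_sg_def\<close>)
  qed
qed

theorem mainTheorem17:
  fixes p :: nat
  assumes "prime p"
  shows "{S. numerical_semigroup S \<and> genus S = p + 1 \<and> reflective S \<and> symmetric_ns S}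
         = {if p = 2 then generated {2, 7} else generated ({p} \<union> {p + 2 .. 2 * p - 1})}"
proof -
  have p2: "p \<ge> 2" using assms prime_ge_2_nat by blast
  have "(if p = 2 then generated {2, 7} else generated ({p} \<union> {p + 2 .. 2 * p - 1}))
        = reflective_symmetric_sg p"
    using generated_2_7 generated_odd[of p] p2 by auto
  moreover have "{S. numerical_semigroup S \<and> genus S = p + 1 \<and> reflective S \<and> symmetric_ns S}
        = {reflective_symmetric_sg p}"
    using reflective_symmetric_prime_genus[OF assms] reflective_symmetric_sg_properties[OF p2]
    by blast
  ultimately show ?thesis by simp
qed

end
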